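(* Assume GCH. Let $\lambda<\kappa$ be infinite cardinals with $\mathrm{cf}(\kappa)\notin\{\mu^+ : \mathrm{cf}(\mu)=\omega\}$. Then every $(\lambda,\kappa)$-graph contains an $(\aleph_0,\kappa)$-subgraph, or otherwise a collection of pairwise disjoint $(\aleph_0,\kappa_i)$-subgraphs, $i<\mathrm{cf}(\kappa)$, where $\{\kappa_i : i<\mathrm{cf}(\kappa)\}$ is cofinal in $\kappa$.
   Context: For infinite cardinals $\lambda<\kappa$, a $(\lambda,\kappa)$-graph is a bipartite graph with bipartition $(A,B)$, $|A|=\lambda$, $|B|=\kappa$, in which every vertex $b\in B$ has infinitely many neighbours in $A$. An $(\aleph_0,\nu)$-subgraph of such a graph is a subgraph with bipartition $(C,D)$, $C\subseteq A$, $D\subseteq B$, which is itself an $(\aleph_0,\nu)$-graph. *)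

theory Defs
  imports Main
begin

unbundle cardinal_syntax


text \<open>Cardinals are represented by sets via the BNF cardinal library of Main:
  the cardinal of a set X is the canonical cardinal well-order card_of X.\<close>

definition GCH_on :: "'a itself \<Rightarrow> bool" where
  "GCH_on _ \<longleftrightarrow> (\<forall>X::'a set. infinite X \<longrightarrow> (card_of (Pow X)) =o cardSuc (card_of (X)))"

definition cofinal_in :: "'a rel \<Rightarrow> 'a set \<Rightarrow> bool" where
  "cofinal_in r S \<longleftrightarrow> S \<subseteq> Field r \<and> (\<forall>a\<in>Field r. \<exists>b\<in>S. (a, b) \<in> r)"

text \<open>is_cf X Y: the cardinality of Y is the cofinality of the cardinal (card_of (X)),
  i.e. the least cardinality of a cofinal subset of the initial ordinal (card_of (X)).\<close>
definition is_cf :: "'a set \<Rightarrow> 'c set \<Rightarrow> bool" where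
  "is_cf X Y \<longleftrightarrow>
     (\<exists>S. cofinal_in (card_of (X)) S \<and> (card_of (Y)) =o (card_of (S))) \<and>
     (\<forall>S. cofinal_in (card_of (X)) S \<longrightarrow> (card_of (Y)) \<le>o (card_of (S)))"

text \<open>(lambda,kappa)-graph with bipartition (A,B) and edge set E, where lambda = (card_of (A)),
  kappa = (card_of (B)): lambda < kappa infinite, every b in B has infinitely many neighbours in A.\<close>
definition lk_graph :: "'a set \<Rightarrow> 'b set \<Rightarrow> ('a \<times> 'b) set \<Rightarrow> bool" where
  "lk_graph A B E \<longleftrightarrow> infinite A \<and> (card_of (A)) <o (card_of (B)) \<and> E \<subseteq> A \<times> B \<and>
     (\<forall>b\<in>B. infinite {a\<in>A. (a, b) \<in> E})"

definition aleph0_subgraph :: "'a set \<Rightarrow> 'b set \<Rightarrow> ('a \<times> 'b) set \<Rightarrow> 'a set \<Rightarrow> 'b set \<Rightarrow> bool" where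
  "aleph0_subgraph A B E C D \<longleftrightarrow> C \<subseteq> A \<and> D \<subseteq> B \<and>
     (card_of (C)) =o (card_of (UNIV :: nat set)) \<and> lk_graph C D (E \<inter> (C \<times> D))"

end

theory Submission
  imports Defs "HOL-Library.Countable_Set_Type"
begin

(* Suppose there is no (aleph_0, kappa)-subgraph. Then for every countably infinite T \<subseteq> A, fewer
   than kappa vertices of B have infinitely many neighbours in T.
   A set X with |X| < cf kappa has fewer than cf kappa countably infinite subsets: either
   2^|X| < cf kappa, or by GCH cf kappa = |X|^+; then |X| has uncountable cofinality, so every
   countable subset of X lies in one of the |X| proper initial segments, each of which has at most
   |X| subsets. As every vertex of B has infinitely many neighbours in A, lambda < cf kappa would
   cover B by fewer than cf kappa sets of size < kappa. So kappa is singular, hence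
   kappa > lambda^+ = 2^lambda.
   Along cf kappa one now chooses pieces (C_i, D_i) by transfinite recursion: fewer than kappa
   vertices of B lie in an earlier D or have infinitely many neighbours in the union of the earlier
   C's. Each of the kappa remaining vertices picks a countably infinite set of fresh neighbours;
   as there are only 2^lambda < kappa such sets, one of them, taken as C_i, is picked by more
   vertices than any prescribed cardinal below kappa. *)

unbundle cardinal_syntax


lemma card_of_rel_refl: "a \<in> X \<Longrightarrow> (a, a) \<in> |X|"
  using wo_rel.REFL[of "|X|"] card_of_Well_order[of X]
  by (auto simp: wo_rel_def refl_on_def Field_card_of)

lemma card_of_rel_trans: "(a, b) \<in> |X| \<Longrightarrow> (b, c) \<in> |X| \<Longrightarrow> (a, c) \<in> |X|"
  using wo_rel.TRANS[of "|X|"] card_of_Well_order[of X] by (auto simp: wo_rel_def trans_def)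

lemma card_of_rel_total: "a \<in> X \<Longrightarrow> b \<in> X \<Longrightarrow> (a, b) \<in> |X| \<or> (b, a) \<in> |X|"
  using wo_rel.TOTALS[of "|X|"] card_of_Well_order[of X] by (auto simp: wo_rel_def Field_card_of)

lemma card_of_rel_antisym: "(a, b) \<in> |X| \<Longrightarrow> (b, a) \<in> |X| \<Longrightarrow> a = b"
  using wo_rel.ANTISYM[of "|X|"] card_of_Well_order[of X] by (auto simp: wo_rel_def antisym_def)

lemma card_of_rel_in: "(a, b) \<in> |X| \<Longrightarrow> a \<in> X \<and> b \<in> X"
  using FieldI1 FieldI2 Field_card_of by metis

lemma underS_card_of_mono: "(a, b) \<in> |X| \<Longrightarrow> underS |X| a \<subseteq> underS |X| b"
  by (rule underS_incr) (auto simp: trans_def antisym_def intro: card_of_rel_trans card_of_rel_antisym)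

lemma card_of_finite_ordLess_infinite: "finite A \<Longrightarrow> infinite B \<Longrightarrow> |A| <o |B|"
  by (metis card_of_Well_order Field_card_of finite_ordLess_infinite)

lemma card_of_Times_ordLess_infinite:
  assumes C: "infinite C" and "|A| <o |C|" "|B| <o |C|"
  shows "|A \<times> B| <o |C|"
proof -
  let ?P = "A <+> B"
  have P: "|?P| <o |C|" using card_of_Plus_ordLess_infinite[OF assms] .
  have "|A \<times> B| \<le>o |?P \<times> ?P|"
    using ordLeq_transitive[OF card_of_Times_mono1[OF card_of_Plus1] card_of_Times_mono2[OF card_of_Plus2]] .
  moreover have "|?P \<times> ?P| <o |C|"
  proof (cases "finite ?P")
    case True
    then show ?thesis using card_of_finite_ordLess_infinite[OF _ C] finite_cartesian_product by blast
  next
    case False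
    then show ?thesis using ordIso_ordLess_trans[OF card_of_Times_same_infinite P] by simp
  qed
  ultimately show ?thesis by (rule ordLeq_ordLess_trans)
qed

lemma card_of_under_ordLess:
  assumes X: "infinite X" and a: "a \<in> X"
  shows "|under |X| a| <o |X|"
proof -
  have "under |X| a = {a} \<union> underS |X| a"
    using a card_of_rel_refl[of a X] unfolding under_def underS_def by auto
  moreover have "|underS |X| a| <o |X|"
    using card_of_underS[OF card_of_Card_order] a by (simp add: Field_card_of)
  moreover have "|{a}| <o |X|" using card_of_finite_ordLess_infinite X by blast
  ultimately show ?thesis using card_of_Un_ordLess_infinite[OF X] by metis
qed

lemma card_of_ordLess_underS:
  assumes "|Y| <o |B|"
  shows "\<exists>a\<in>B. |Y| \<le>o |underS |B| a|"
proof -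
  obtain a where "a \<in> Field |B|" and a: "|Y| =o Restr |B| (underS |B| a)"
    using ordLess_iff_ordIso_Restr[OF card_of_Well_order[of B] card_of_Well_order[of Y]] assms
    by blast
  then have aB: "a \<in> B" by (simp add: Field_card_of)
  from a obtain g where g: "iso |Y| (Restr |B| (underS |B| a)) g" unfolding ordIso_def by blast
  have "underS |B| a \<subseteq> Field |B|"
    unfolding underS_def Field_card_of using card_of_rel_in by fastforce
  then have "Field (Restr |B| (underS |B| a)) = underS |B| a"
    using Refl_Field_Restr2 card_of_Well_order
    unfolding well_order_on_def linear_order_on_def partial_order_on_def preorder_on_def by blast
  then have "bij_betw g Y (underS |B| a)" using g unfolding iso_def by (simp add: Field_card_of)
  then show ?thesis using aB card_of_ordIso ordIso_imp_ordLeq by blast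
qed

lemma Well_order_finite_has_max:
  assumes r: "Well_order r" and "finite S" "S \<noteq> {}" "S \<subseteq> Field r"
  shows "\<exists>m\<in>S. \<forall>s\<in>S. (s, m) \<in> r"
  using assms(2-4)
proof (induction S rule: finite_ne_induct)
  case (singleton x)
  then show ?case using wo_rel.REFL[of r] r by (auto simp: wo_rel_def refl_on_def)
next
  case (insert x F)
  then obtain m where m: "m \<in> F" "\<forall>s\<in>F. (s, m) \<in> r" by auto
  have "x \<in> Field r" "m \<in> Field r" using insert m by auto
  then have "(x, m) \<in> r \<or> (m, x) \<in> r"
    using wo_rel.TOTALS[of r] r by (auto simp: wo_rel_def)
  moreover have "(s, x) \<in> r" if "(s, m) \<in> r" "(m, x) \<in> r" for s
    using wo_rel.TRANS[of r] r that by (auto simp: wo_rel_def trans_def)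
  moreover have "(x, x) \<in> r"
    using wo_rel.REFL[of r] r \<open>x \<in> Field r\<close> by (auto simp: wo_rel_def refl_on_def)
  ultimately show ?case using m by blast
qed


subsection \<open>Cofinal sets and cofinality\<close>

lemma cofinal_in_infinite:
  assumes X: "infinite X" and S: "cofinal_in |X| S"
  shows "infinite S"
proof
  assume fin: "finite S"
  have SX: "S \<subseteq> X" and cof: "\<forall>a\<in>X. \<exists>b\<in>S. (a, b) \<in> |X|"
    using S by (auto simp: cofinal_in_def Field_card_of)
  have "X \<noteq> {}" using X by auto
  then have "S \<noteq> {}" using cof by blast
  then obtain m where m: "m \<in> S" "\<forall>s\<in>S. (s, m) \<in> |X|"
    using Well_order_finite_has_max[of "|X|" S] card_of_Well_order[of X] fin SX
    by (auto simp: Field_card_of)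
  have "X \<subseteq> under |X| m"
  proof
    fix a assume "a \<in> X"
    then obtain b where "b \<in> S" "(a, b) \<in> |X|" using cof by blast
    then have "(a, m) \<in> |X|" using m(2) card_of_rel_trans[of a b X m] by blast
    then show "a \<in> under |X| m" unfolding under_def by simp
  qed
  then have "|X| \<le>o |under |X| m|" by (rule card_of_mono1)
  moreover have "|under |X| m| <o |X|" using card_of_under_ordLess[OF X] m(1) SX by blast
  ultimately show False using not_ordLess_ordLeq by blast
qed

lemma cofinal_in_iso_image:
  assumes f: "iso |X| |M| f" and S: "cofinal_in |X| S"
  shows "cofinal_in |M| (f ` S)"
  unfolding cofinal_in_def
proof (intro conjI ballI)
  have FM: "f ` X = M" using iso_Field[OF f] by (simp add: Field_card_of)
  then show "f ` S \<subseteq> Field |M|" using S by (auto simp: cofinal_in_def Field_card_of)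
  fix a' assume "a' \<in> Field |M|"
  then obtain a where a: "a \<in> X" "a' = f a" using FM by (auto simp: Field_card_of)
  then obtain b where "b \<in> S" "(a, b) \<in> |X|" using S by (auto simp: cofinal_in_def Field_card_of)
  then show "\<exists>b'\<in>f ` S. (a', b') \<in> |M|" using iso_forward[OF _ f] a by blast
qed

lemma is_cf_nat_if_countable_cofinal:
  assumes "infinite M" "countable S" "cofinal_in |M| S"
  shows "is_cf M (UNIV::nat set)"
  unfolding is_cf_def
proof (intro conjI allI impI)
  have "infinite S" using cofinal_in_infinite assms by blast
  then have "|S| =o |UNIV::nat set|" using assms(2) by blast
  then show "\<exists>S. cofinal_in |M| S \<and> |UNIV::nat set| =o |S|"
    using assms(3) ordIso_symmetric by blast
next
  fix S' assume "cofinal_in |M| S'"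
  then show "|UNIV::nat set| \<le>o |S'|"
    using cofinal_in_infinite assms(1) infinite_iff_card_of_nat by blast
qed

lemma countable_bounded_if_not_cf_nat:
  assumes X: "infinite X" and M: "|M| =o |X|" and ncf: "\<not> is_cf M (UNIV::nat set)"
    and S: "S \<subseteq> X" "countable S"
  shows "\<exists>a\<in>X. S \<subseteq> under |X| a"
proof (rule ccontr)
  assume unbounded: "\<not> ?thesis"
  have "cofinal_in |X| S"
    unfolding cofinal_in_def Field_card_of
  proof (intro conjI ballI)
    fix a assume a: "a \<in> X"
    then obtain b where "b \<in> S" "(b, a) \<notin> |X|" using unbounded unfolding under_def by blast
    then show "\<exists>b\<in>S. (a, b) \<in> |X|" using card_of_rel_total[of a X b] a S(1) by blast
  qed fact
  moreover obtain f where "iso |X| |M| f"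
    using ordIso_symmetric[OF M] unfolding ordIso_def by auto
  ultimately have "cofinal_in |M| (f ` S)" using cofinal_in_iso_image by blast
  moreover have "infinite M" using card_of_ordIso_finite[OF M] X by simp
  ultimately have "is_cf M (UNIV::nat set)" using is_cf_nat_if_countable_cofinal S(2) by blast
  then show False using ncf by blast
qed

lemma is_cf_ordLeq: "is_cf B K \<Longrightarrow> |K| \<le>o |B|"
proof -
  assume "is_cf B K"
  moreover have "cofinal_in |B| B"
    unfolding cofinal_in_def Field_card_of using card_of_rel_refl[of _ B] by blast
  ultimately show ?thesis unfolding is_cf_def by blast
qed

lemma is_cf_infinite:
  assumes "is_cf B K" "infinite B"
  shows "infinite K"
proof -
  obtain S where "cofinal_in |B| S" "|K| =o |S|" using assms(1) unfolding is_cf_def by blast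
  then show ?thesis using cofinal_in_infinite assms(2) card_of_ordIso_finite by blast
qed

lemma card_of_UNION_ordLess_cf:
  assumes cf: "is_cf B K" and B: "infinite B"
    and I: "|I| <o |K|" and F: "\<forall>i\<in>I. |F i| <o |B|"
  shows "|\<Union>i\<in>I. F i| <o |B|"
proof -
  have "\<forall>i\<in>I. \<exists>a. a \<in> B \<and> |F i| \<le>o |underS |B| a|"
    using card_of_ordLess_underS F by blast
  from bchoice[OF this] obtain \<alpha> where \<alpha>: "\<forall>i\<in>I. \<alpha> i \<in> B \<and> |F i| \<le>o |underS |B| (\<alpha> i)|"
    by blast
  have "|\<alpha> ` I| <o |K|" using ordLeq_ordLess_trans[OF card_of_image I] .
  then have "\<not> cofinal_in |B| (\<alpha> ` I)"
    using cf not_ordLess_ordLeq[of "|\<alpha> ` I|" "|K|"] unfolding is_cf_def by blast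
  moreover have "\<alpha> ` I \<subseteq> Field |B|" using \<alpha> by (auto simp: Field_card_of)
  ultimately obtain \<beta> where \<beta>: "\<beta> \<in> B" "\<forall>i\<in>I. (\<beta>, \<alpha> i) \<notin> |B|"
    unfolding cofinal_in_def by (auto simp: Field_card_of)
  have "|F i| \<le>o |underS |B| \<beta>|" if i: "i \<in> I" for i
  proof -
    have "(\<alpha> i, \<beta>) \<in> |B|" using card_of_rel_total[of "\<alpha> i" B \<beta>] \<alpha> \<beta> i by blast
    then have "|underS |B| (\<alpha> i)| \<le>o |underS |B| \<beta>|"
      by (rule card_of_mono1[OF underS_card_of_mono])
    then show ?thesis using \<alpha> i ordLeq_transitive by blast
  qed
  then have "|SIGMA i:I. F i| \<le>o |I \<times> underS |B| \<beta>|"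
    using card_of_Sigma_mono1[of I F "\<lambda>_. underS |B| \<beta>"] by simp
  then have "|\<Union>i\<in>I. F i| \<le>o |I \<times> underS |B| \<beta>|"
    by (rule ordLeq_transitive[OF card_of_UNION_Sigma])
  moreover have "|I \<times> underS |B| \<beta>| <o |B|"
  proof (rule card_of_Times_ordLess_infinite[OF B])
    show "|I| <o |B|" using ordLess_ordLeq_trans[OF I is_cf_ordLeq[OF cf]] .
    show "|underS |B| \<beta>| <o |B|"
      using card_of_underS[OF card_of_Card_order] \<beta>(1) by (simp add: Field_card_of)
  qed
  ultimately show ?thesis by (rule ordLeq_ordLess_trans)
qed

lemma cardSuc_regular:
  assumes cf: "is_cf B K" and X: "infinite X" and B: "|B| =o cardSuc |X|"
  shows "\<not> |K| <o |B|"
proof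
  assume KB: "|K| <o |B|"
  obtain S where S: "cofinal_in |B| S" "|K| =o |S|" using cf unfolding is_cf_def by blast
  have "|S| <o cardSuc |X|"
    using ordLess_ordIso_trans[OF ordIso_ordLess_trans[OF ordIso_symmetric[OF S(2)] KB] B] .
  then have SX: "|S| \<le>o |X|"
    using cardSuc_ordLeq_ordLess[OF card_of_Card_order card_of_Card_order] by blast
  have XB: "|X| <o |B|"
    using ordLess_ordIso_trans[OF cardSuc_greater[OF card_of_Card_order] ordIso_symmetric[OF B]] .
  then have infB: "infinite B" using X card_of_ordLeq_finite ordLess_imp_ordLeq by blast
  have "B \<subseteq> (\<Union>s\<in>S. under |B| s)"
    using S(1) unfolding cofinal_in_def Field_card_of under_def by blast
  moreover have "|under |B| s| \<le>o |X|" if "s \<in> S" for s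
  proof -
    have "s \<in> B" using that S(1) unfolding cofinal_in_def Field_card_of by blast
    then have "|under |B| s| <o cardSuc |X|"
      using ordLess_ordIso_trans[OF card_of_under_ordLess[OF infB] B] by blast
    then show ?thesis using cardSuc_ordLeq_ordLess[OF card_of_Card_order card_of_Card_order] by blast
  qed
  then have "|\<Union>s\<in>S. under |B| s| \<le>o |X|"
    using card_of_UNION_ordLeq_infinite[OF X SX] by blast
  ultimately have "|B| \<le>o |X|" using ordLeq_transitive[OF card_of_mono1] by blast
  then show False using XB not_ordLess_ordLeq by blast
qed


subsection \<open>Countable subsets under GCH\<close>

definition countably_infinite_subsets :: "'a set \<Rightarrow> 'a set set" where
  "countably_infinite_subsets X = {S. S \<subseteq> X \<and> countable S \<and> infinite S}"

lemma card_of_Pow_ordLeq_GCH: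
  fixes X Y :: "'a set"
  assumes gch: "GCH_on TYPE('a)" and X: "infinite X" and YX: "|Y| <o |X|"
  shows "|Pow Y| \<le>o |X|"
proof (cases "finite Y")
  case True
  then have "finite (Pow Y)" by simp
  then show ?thesis using ordLess_imp_ordLeq[OF card_of_finite_ordLess_infinite[OF _ X]] by blast
next
  case False
  have "|Pow Y| =o cardSuc |Y|" using gch False unfolding GCH_on_def by blast
  moreover have "cardSuc |Y| \<le>o |X|" using cardSuc_least[OF card_of_Card_order card_of_Card_order YX] .
  ultimately show ?thesis by (rule ordIso_ordLeq_trans)
qed

lemma card_of_countably_infinite_subsets_bounded:
  fixes X :: "'a set"
  assumes gch: "GCH_on TYPE('a)" and X: "infinite X"
    and bounded: "\<And>S. S \<subseteq> X \<Longrightarrow> countable S \<Longrightarrow> \<exists>a\<in>X. S \<subseteq> under |X| a"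
  shows "|countably_infinite_subsets X| \<le>o |X|"
proof -
  have "countably_infinite_subsets X \<subseteq> (\<Union>a\<in>X. Pow (under |X| a))"
    unfolding countably_infinite_subsets_def using bounded by blast
  moreover have "|\<Union>a\<in>X. Pow (under |X| a)| \<le>o |X|"
  proof (rule card_of_UNION_ordLeq_infinite[OF X ordLeq_refl[OF card_of_Card_order]])
    show "\<forall>a\<in>X. |Pow (under |X| a)| \<le>o |X|"
      using card_of_Pow_ordLeq_GCH[OF gch X] card_of_under_ordLess[OF X] by blast
  qed
  ultimately show ?thesis by (rule ordLeq_transitive[OF card_of_mono1])
qed

lemma card_of_countably_infinite_subsets_ordLess:
  fixes X :: "'a set" and K :: "'c set"
  assumes gch: "GCH_on TYPE('a)"
    and cf_cond: "\<not> (\<exists>M::'c set. cardSuc |M| =o |K| \<and> is_cf M (UNIV::nat set))"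
    and K: "infinite K" and XK: "|X| <o |K|"
  shows "|countably_infinite_subsets X| <o |K|"
proof (cases "finite X")
  case True
  then have "countably_infinite_subsets X = {}"
    unfolding countably_infinite_subsets_def using finite_subset by blast
  then show ?thesis using card_of_finite_ordLess_infinite[OF finite.emptyI K] by simp
next
  case X: False
  show ?thesis
  proof (cases "|Pow X| <o |K|")
    case True
    have "countably_infinite_subsets X \<subseteq> Pow X" unfolding countably_infinite_subsets_def by blast
    then show ?thesis using ordLeq_ordLess_trans[OF card_of_mono1 True] by blast
  next
    case False
    then have "|K| \<le>o |Pow X|"
      using not_ordLess_iff_ordLeq[OF card_of_Well_order card_of_Well_order] by blast
    moreover have "|Pow X| =o cardSuc |X|" using gch X unfolding GCH_on_def by blast
    ultimately have "|K| \<le>o cardSuc |X|" by (rule ordLeq_ordIso_trans)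
    moreover have "cardSuc |X| \<le>o |K|"
      using cardSuc_least[OF card_of_Card_order card_of_Card_order XK] .
    ultimately have suc: "cardSuc |X| =o |K|" unfolding ordIso_iff_ordLeq by blast
    obtain h where h: "inj_on h X" "h ` X \<subseteq> K"
      using card_of_ordLeq[of X K] ordLess_imp_ordLeq[OF XK] by blast
    have MX: "|h ` X| =o |X|"
      using card_of_ordIso[of "h ` X" X] inj_on_imp_bij_betw[OF h(1)] bij_betw_inv by blast
    then have "cardSuc |h ` X| =o |K|"
      using ordIso_transitive[OF cardSuc_invar_ordIso[OF card_of_Card_order card_of_Card_order, THEN iffD2] suc]
      by blast
    then have "\<not> is_cf (h ` X) (UNIV::nat set)" using cf_cond by blast
    then have "|countably_infinite_subsets X| \<le>o |X|"
      using card_of_countably_infinite_subsets_bounded[OF gch X]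
        countable_bounded_if_not_cf_nat[OF X MX] by blast
    then show ?thesis using XK by (rule ordLeq_ordLess_trans)
  qed
qed


subsection \<open>Transfinite choice and pigeonholing\<close>

lemma wo_rel_recursive_choice:
  fixes r :: "'a rel" and P :: "('a \<Rightarrow> 'b) \<Rightarrow> 'a \<Rightarrow> 'b \<Rightarrow> bool"
  assumes r: "wo_rel r"
    and local: "\<And>f g j. \<forall>i\<in>underS r j. f i = g i \<Longrightarrow> P f j = P g j"
    and step: "\<And>f j. j \<in> Field r \<Longrightarrow> \<forall>i\<in>underS r j. P f i (f i) \<Longrightarrow> \<exists>p. P f j p"
  shows "\<exists>f. \<forall>j\<in>Field r. P f j (f j)"
proof -
  define H where "H f j = (SOME p. P f j p)" for f j
  have "wo_rel.adm_wo r H"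
    unfolding wo_rel.adm_wo_def[OF r]
  proof (intro allI impI)
    fix f g :: "'a \<Rightarrow> 'b" and j assume "\<forall>i\<in>underS r j. f i = g i"
    then show "H f j = H g j" unfolding H_def using local by metis
  qed
  then have fix_f: "f j = (SOME p. P f j p)" if "f = wo_rel.worec r H" for f j
    using wo_rel.worec_fixpoint[OF r] that unfolding H_def by metis
  define f where "f = wo_rel.worec r H"
  have "j \<in> Field r \<longrightarrow> P f j (f j)" for j
  proof (induction j rule: wo_rel.well_order_induct[OF r])
    case (1 j)
    show ?case
    proof
      assume "j \<in> Field r"
      moreover have "\<forall>i\<in>underS r j. P f i (f i)"
        using 1 unfolding underS_def by (blast intro: FieldI1)
      ultimately have "\<exists>p. P f j p" by (rule step)
      then show "P f j (f j)" unfolding fix_f[OF f_def, of j] by (rule someI_ex)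
    qed
  qed
  then show ?thesis by blast
qed

lemma disjoint_family_if_avoids_underS:
  assumes "\<forall>j\<in>K. F j \<inter> (\<Union>i\<in>underS |K| j. F i) = {}"
  shows "\<forall>i\<in>K. \<forall>j\<in>K. i \<noteq> j \<longrightarrow> F i \<inter> F j = {}"
proof (intro ballI impI)
  fix i j assume ij: "i \<in> K" "j \<in> K" "i \<noteq> j"
  then have "i \<in> underS |K| j \<or> j \<in> underS |K| i"
    using card_of_rel_total[of i K j] unfolding underS_def by blast
  then show "F i \<inter> F j = {}" using assms ij by blast
qed

lemma large_fibre:
  assumes B: "infinite B" and N: "|N ` R| <o |B|" and W: "|W| <o |B|" and R: "\<not> |R| <o |B|"
  shows "\<exists>b\<in>R. |W| <o |{r\<in>R. N r = N b}|"
proof (rule ccontr)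
  assume "\<not> ?thesis"
  then have "\<forall>T\<in>N ` R. |{r\<in>R. N r = T}| \<le>o |W|"
    using not_ordLess_iff_ordLeq[OF card_of_Well_order card_of_Well_order] by blast
  then have "|SIGMA T:N ` R. {r\<in>R. N r = T}| \<le>o |N ` R \<times> W|"
    using card_of_Sigma_mono1[of "N ` R" _ "\<lambda>_. W"] by simp
  then have "|\<Union>T\<in>N ` R. {r\<in>R. N r = T}| \<le>o |N ` R \<times> W|"
    by (rule ordLeq_transitive[OF card_of_UNION_Sigma])
  moreover have "R \<subseteq> (\<Union>T\<in>N ` R. {r\<in>R. N r = T})" by blast
  ultimately have "|R| \<le>o |N ` R \<times> W|" using ordLeq_transitive[OF card_of_mono1] by blast
  moreover have "|N ` R \<times> W| <o |B|" using card_of_Times_ordLess_infinite[OF B N W] .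
  ultimately have "|R| <o |B|" by (rule ordLeq_ordLess_trans)
  with R show False ..
qed

lemma countable_or_card_of_UNION_ordLeq:
  assumes "\<forall>i\<in>I. countable (F i)"
  shows "countable (\<Union>i\<in>I. F i) \<or> |\<Union>i\<in>I. F i| \<le>o |I|"
proof (cases "finite I")
  case True
  then show ?thesis using assms by (simp add: countable_finite)
next
  case False
  have "|F i| \<le>o |I|" if "i \<in> I" for i
  proof -
    have "|F i| \<le>o |UNIV::nat set|" using assms that countable_card_of_nat by blast
    moreover have "|UNIV::nat set| \<le>o |I|" using False infinite_iff_card_of_nat by blast
    ultimately show ?thesis by (rule ordLeq_transitive)
  qed
  then show ?thesis
    using card_of_UNION_ordLeq_infinite[OF False ordLeq_refl[OF card_of_Card_order]] by blast
qed


definition infinitely_linked :: "('a \<times> 'b) set \<Rightarrow> 'a set \<Rightarrow> 'b set \<Rightarrow> 'b set" where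
  "infinitely_linked E T B = {b\<in>B. infinite {a\<in>T. (a, b) \<in> E}}"

lemma infinitely_linked_eq_UNION:
  "infinitely_linked E U B =
     (\<Union>T\<in>countably_infinite_subsets U. infinitely_linked E T B)"
proof (intro equalityI subsetI)
  fix b assume "b \<in> infinitely_linked E U B"
  then obtain T where T: "T \<subseteq> {a\<in>U. (a, b) \<in> E}" "countable T" "infinite T" and "b \<in> B"
    unfolding infinitely_linked_def using infinite_countable_subset' by blast
  moreover from T(1) have "{a\<in>T. (a, b) \<in> E} = T" by blast
  ultimately show "b \<in> (\<Union>T\<in>countably_infinite_subsets U. infinitely_linked E T B)"
    unfolding countably_infinite_subsets_def infinitely_linked_def by auto
next
  fix b assume "b \<in> (\<Union>T\<in>countably_infinite_subsets U. infinitely_linked E T B)"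
  then obtain T where "T \<subseteq> U" "b \<in> B" "infinite {a\<in>T. (a, b) \<in> E}"
    unfolding countably_infinite_subsets_def infinitely_linked_def by blast
  moreover from \<open>T \<subseteq> U\<close> have "{a\<in>T. (a, b) \<in> E} \<subseteq> {a\<in>U. (a, b) \<in> E}" by blast
  ultimately show "b \<in> infinitely_linked E U B"
    unfolding infinitely_linked_def using infinite_super by blast
qed

lemma aleph0_subgraphI:
  assumes C: "C \<subseteq> A" "countable C" "infinite C"
    and D: "D \<subseteq> infinitely_linked E C B" "|A| <o |D|"
  shows "aleph0_subgraph A B E C D"
proof -
  have "|C| =o |UNIV::nat set|" using countable_or_card_of[OF C(2)] C(3) by blast
  moreover have "|C| <o |D|" using ordLeq_ordLess_trans[OF card_of_mono1[OF C(1)] D(2)] .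
  moreover have "{a\<in>C. (a, b) \<in> E \<inter> C \<times> D} = {a\<in>C. (a, b) \<in> E}" if "b \<in> D" for b
    using that by blast
  ultimately show ?thesis
    using C D(1) unfolding aleph0_subgraph_def lk_graph_def infinitely_linked_def by auto
qed

lemma aleph0_subgraph_countable:
  "aleph0_subgraph A B E C D \<Longrightarrow> C \<subseteq> A \<and> countable C"
  unfolding aleph0_subgraph_def countable_card_of_nat using ordIso_imp_ordLeq by blast


subsection \<open>Graphs without a full countable subgraph\<close>

locale no_full_aleph0_subgraph =
  fixes A :: "'a set" and B :: "'b set" and E :: "('a \<times> 'b) set" and K :: "'c set"
  assumes gch: "GCH_on TYPE('a)"
    and graph: "lk_graph A B E"
    and cf: "is_cf B K"
    and cf_cond: "\<not> (\<exists>M::'c set. cardSuc |M| =o |K| \<and> is_cf M (UNIV::nat set))"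
    and no_full: "\<not> (\<exists>C D. aleph0_subgraph A B E C D \<and> |D| =o |B| )"
begin

lemma infinite_A: "infinite A"
  and A_ordLess_B: "|A| <o |B|"
  using graph unfolding lk_graph_def by auto

lemma infinite_B: "infinite B"
  using infinite_A card_of_ordLeq_finite[OF ordLess_imp_ordLeq[OF A_ordLess_B]] by blast

lemma card_of_linked_countable:
  assumes T: "T \<subseteq> A" "countable T"
  shows "|infinitely_linked E T B| <o |B|"
proof (cases "finite T")
  case True
  then have "infinitely_linked E T B = {}" unfolding infinitely_linked_def by auto
  then show ?thesis using card_of_finite_ordLess_infinite[OF finite.emptyI infinite_B] by simp
next
  case False
  show ?thesis
  proof (rule ccontr)
    assume "\<not> ?thesis"
    then have "|B| \<le>o |infinitely_linked E T B|"
      using not_ordLess_iff_ordLeq[OF card_of_Well_order card_of_Well_order] by blast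
    moreover have "|infinitely_linked E T B| \<le>o |B|"
      by (rule card_of_mono1) (auto simp: infinitely_linked_def)
    ultimately have full: "|infinitely_linked E T B| =o |B|" unfolding ordIso_iff_ordLeq by blast
    then have "|A| <o |infinitely_linked E T B|"
      using ordLess_ordIso_trans[OF A_ordLess_B ordIso_symmetric] by blast
    then have "aleph0_subgraph A B E T (infinitely_linked E T B)"
      using aleph0_subgraphI[OF T False order_refl] by blast
    then show False using no_full full by blast
  qed
qed

lemma card_of_linked_ordLess:
  assumes U: "U \<subseteq> A" and small: "countable U \<or> |U| <o |K|"
  shows "|infinitely_linked E U B| <o |B|"
  using small
proof
  assume "countable U"
  then show ?thesis using card_of_linked_countable[OF U] by blast
next
  assume "|U| <o |K|"
  then have "|countably_infinite_subsets U| <o |K|"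
    using card_of_countably_infinite_subsets_ordLess[OF gch cf_cond is_cf_infinite[OF cf infinite_B]]
    by blast
  moreover have "\<forall>T\<in>countably_infinite_subsets U. |infinitely_linked E T B| <o |B|"
    using card_of_linked_countable U unfolding countably_infinite_subsets_def by blast
  ultimately show ?thesis
    unfolding infinitely_linked_eq_UNION[of E U B] by (rule card_of_UNION_ordLess_cf[OF cf infinite_B])
qed

lemma K_ordLess_B: "|K| <o |B|"
proof (rule ccontr)
  assume "\<not> ?thesis"
  then have "|B| \<le>o |K|" using not_ordLess_iff_ordLeq[OF card_of_Well_order card_of_Well_order] by blast
  then have "|A| <o |K|" using ordLess_ordLeq_trans[OF A_ordLess_B] by blast
  then have "|infinitely_linked E A B| <o |B|" using card_of_linked_ordLess by blast
  moreover have "infinitely_linked E A B = B"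
    using graph unfolding lk_graph_def infinitely_linked_def by auto
  ultimately show False using ordLess_irreflexive[of "|B|"] by simp
qed

lemma Pow_A_ordLess_B: "|Pow A| <o |B|"
proof -
  have "cardSuc |A| \<le>o |B|" using cardSuc_least[OF card_of_Card_order card_of_Card_order A_ordLess_B] .
  moreover have "\<not> |B| =o cardSuc |A|" using cardSuc_regular[OF cf infinite_A] K_ordLess_B by blast
  ultimately have "cardSuc |A| <o |B|"
    using ordLeq_iff_ordLess_or_ordIso ordIso_symmetric by blast
  moreover have "|Pow A| =o cardSuc |A|" using gch infinite_A unfolding GCH_on_def by blast
  ultimately show ?thesis using ordIso_ordLess_trans by blast
qed

lemma unlinked_rest_not_ordLess:
  assumes U: "U \<subseteq> A" "countable U \<or> |U| <o |K|" and V: "|V| <o |B|"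
  shows "\<not> |B - V - infinitely_linked E U B| <o |B|"
proof
  let ?R = "B - V - infinitely_linked E U B"
  assume "|?R| <o |B|"
  then have "|?R \<union> V \<union> infinitely_linked E U B| <o |B|"
    using card_of_Un_ordLess_infinite[OF infinite_B] V card_of_linked_ordLess[OF U] by blast
  moreover have "B \<subseteq> ?R \<union> V \<union> infinitely_linked E U B" by blast
  ultimately show False using card_of_mono1 not_ordLess_ordLeq by blast
qed

lemma fresh_neighbours:
  assumes "b \<in> B - infinitely_linked E U B"
  shows "\<exists>T. T \<subseteq> {a\<in>A. (a, b) \<in> E} - U \<and> countable T \<and> infinite T"
proof -
  have "infinite {a\<in>A. (a, b) \<in> E}" "finite {a\<in>U. (a, b) \<in> E}"
    using assms graph unfolding infinitely_linked_def lk_graph_def by auto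
  moreover have "{a\<in>A. (a, b) \<in> E} \<subseteq> ({a\<in>A. (a, b) \<in> E} - U) \<union> {a\<in>U. (a, b) \<in> E}" by blast
  ultimately have "infinite ({a\<in>A. (a, b) \<in> E} - U)" using finite_subset by blast
  then show ?thesis using infinite_countable_subset' by blast
qed

lemma fresh_piece:
  assumes U: "U \<subseteq> A" "countable U \<or> |U| <o |K|" and V: "|V| <o |B|" and Y: "|Y| <o |B|"
  shows "\<exists>C D. C \<subseteq> A - U \<and> D \<subseteq> B - V \<and> aleph0_subgraph A B E C D \<and> |Y| <o |D| \<and> |D| <o |B|"
proof -
  define R where "R = B - V - infinitely_linked E U B"
  have "\<forall>b\<in>R. \<exists>T. T \<subseteq> {a\<in>A. (a, b) \<in> E} - U \<and> countable T \<and> infinite T"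
    using fresh_neighbours unfolding R_def by blast
  from bchoice[OF this] obtain N
    where N: "\<forall>b\<in>R. N b \<subseteq> {a\<in>A. (a, b) \<in> E} - U \<and> countable (N b) \<and> infinite (N b)"
    by blast
  have "N ` R \<subseteq> Pow A" using N by blast
  then have "|N ` R| <o |B|" using ordLeq_ordLess_trans[OF card_of_mono1 Pow_A_ordLess_B] by blast
  moreover have "|Y <+> A| <o |B|" using card_of_Plus_ordLess_infinite[OF infinite_B Y A_ordLess_B] .
  moreover have "\<not> |R| <o |B|" unfolding R_def using unlinked_rest_not_ordLess[OF U V] .
  ultimately obtain b0 where "b0 \<in> R" and b0: "|Y <+> A| <o |{b\<in>R. N b = N b0}|"
    using large_fibre[OF infinite_B] by blast
  define C where "C = N b0"
  define D where "D = {b\<in>R. N b = C}"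
  have C: "C \<subseteq> A - U" "countable C" "infinite C" using N \<open>b0 \<in> R\<close> unfolding C_def by auto
  have "|Y| <o |D|" "|A| <o |D|"
    using ordLeq_ordLess_trans[OF card_of_Plus1 b0] ordLeq_ordLess_trans[OF card_of_Plus2 b0]
    unfolding D_def C_def by blast+
  moreover have DC: "D \<subseteq> infinitely_linked E C B"
  proof
    fix b assume "b \<in> D"
    then have "b \<in> B" "C \<subseteq> {a\<in>A. (a, b) \<in> E}" using N unfolding D_def R_def by auto
    moreover from this(2) have "{a\<in>C. (a, b) \<in> E} = C" by blast
    ultimately show "b \<in> infinitely_linked E C B" unfolding infinitely_linked_def using C(3) by simp
  qed
  moreover have "|D| <o |B|"
    using ordLeq_ordLess_trans[OF card_of_mono1[OF DC] card_of_linked_countable] C by blast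
  moreover have "D \<subseteq> B - V" unfolding D_def R_def by blast
  ultimately show ?thesis using C aleph0_subgraphI[of C A D E B] by blast
qed

lemma fresh_piece_avoiding:
  assumes J: "|J| <o |K|"
    and earlier: "\<forall>i\<in>J. aleph0_subgraph A B E (C i) (D i) \<and> |D i| <o |B|"
    and Y: "|Y| <o |B|"
  shows "\<exists>C' D'. C' \<subseteq> A - (\<Union>i\<in>J. C i) \<and> D' \<subseteq> B - (\<Union>i\<in>J. D i) \<and>
    aleph0_subgraph A B E C' D' \<and> |Y| <o |D'| \<and> |D'| <o |B|"
proof (rule fresh_piece[OF _ _ _ Y])
  have earlier_C: "\<forall>i\<in>J. C i \<subseteq> A \<and> countable (C i)"
    using earlier by (meson aleph0_subgraph_countable)
  then show "(\<Union>i\<in>J. C i) \<subseteq> A" by blast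
  have "countable (\<Union>i\<in>J. C i) \<or> |\<Union>i\<in>J. C i| \<le>o |J|"
    using earlier_C by (intro countable_or_card_of_UNION_ordLeq) blast
  then show "countable (\<Union>i\<in>J. C i) \<or> |\<Union>i\<in>J. C i| <o |K|"
    using ordLeq_ordLess_trans[OF _ J] by blast
  show "|\<Union>i\<in>J. D i| <o |B|"
    using earlier by (intro card_of_UNION_ordLess_cf[OF cf infinite_B J]) blast
qed

lemma disjoint_pieces:
  assumes Y: "\<forall>j\<in>K. |Y j| <o |B|"
  shows "\<exists>C D. (\<forall>j\<in>K. aleph0_subgraph A B E (C j) (D j) \<and> |Y j| <o |D j| ) \<and>
    (\<forall>i\<in>K. \<forall>j\<in>K. i \<noteq> j \<longrightarrow> C i \<inter> C j = {} \<and> D i \<inter> D j = {})"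
proof -
  define P where "P f j p \<longleftrightarrow>
      fst p \<subseteq> A - (\<Union>i\<in>underS |K| j. fst (f i)) \<and> snd p \<subseteq> B - (\<Union>i\<in>underS |K| j. snd (f i)) \<and>
      aleph0_subgraph A B E (fst p) (snd p) \<and> |Y j| <o |snd p| \<and> |snd p| <o |B|"
    for f :: "'c \<Rightarrow> 'a set \<times> 'b set" and j p
  have "\<exists>f. \<forall>j\<in>Field |K|. P f j (f j)"
  proof (rule wo_rel_recursive_choice)
    show "wo_rel |K|" using card_of_Well_order unfolding wo_rel_def .
    show "P f j = P g j" if "\<forall>i\<in>underS |K| j. f i = g i" for f g j
    proof -
      have "(\<Union>i\<in>underS |K| j. fst (f i)) = (\<Union>i\<in>underS |K| j. fst (g i))"
        and "(\<Union>i\<in>underS |K| j. snd (f i)) = (\<Union>i\<in>underS |K| j. snd (g i))"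
        using that by auto
      then show ?thesis by (intro ext) (simp add: P_def)
    qed
    show "\<exists>p. P f j p" if j: "j \<in> Field |K|" and prev: "\<forall>i\<in>underS |K| j. P f i (f i)" for f j
    proof -
      have earlier: "\<forall>i\<in>underS |K| j. aleph0_subgraph A B E (fst (f i)) (snd (f i)) \<and> |snd (f i)| <o |B|"
        using prev unfolding P_def by blast
      have J: "|underS |K| j| <o |K|" using card_of_underS[OF card_of_Card_order j] .
      have Yj: "|Y j| <o |B|" using Y j by (simp add: Field_card_of)
      from fresh_piece_avoiding[OF J earlier Yj] obtain C D
        where "C \<subseteq> A - (\<Union>i\<in>underS |K| j. fst (f i))" "D \<subseteq> B - (\<Union>i\<in>underS |K| j. snd (f i))"
          "aleph0_subgraph A B E C D" "|Y j| <o |D|" "|D| <o |B|"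
        by blast
      then have "P f j (C, D)" unfolding P_def by simp
      then show ?thesis ..
    qed
  qed
  then obtain f where f: "\<forall>j\<in>K. P f j (f j)" by (auto simp: Field_card_of)
  have "fst (f j) \<subseteq> A - (\<Union>i\<in>underS |K| j. fst (f i))"
    and "snd (f j) \<subseteq> B - (\<Union>i\<in>underS |K| j. snd (f i))" if "j \<in> K" for j
    using f that unfolding P_def by blast+
  then have "\<forall>j\<in>K. fst (f j) \<inter> (\<Union>i\<in>underS |K| j. fst (f i)) = {}"
    and "\<forall>j\<in>K. snd (f j) \<inter> (\<Union>i\<in>underS |K| j. snd (f i)) = {}"
    by blast+
  then have "\<forall>i\<in>K. \<forall>j\<in>K. i \<noteq> j \<longrightarrow> fst (f i) \<inter> fst (f j) = {} \<and> snd (f i) \<inter> snd (f j) = {}"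
    using disjoint_family_if_avoids_underS[of K "\<lambda>j. fst (f j)"]
      disjoint_family_if_avoids_underS[of K "\<lambda>j. snd (f j)"] by simp
  moreover have "\<forall>j\<in>K. aleph0_subgraph A B E (fst (f j)) (snd (f j)) \<and> |Y j| <o |snd (f j)|"
    using f unfolding P_def by blast
  ultimately show ?thesis
    by (intro exI[of _ "\<lambda>j. fst (f j)"] exI[of _ "\<lambda>j. snd (f j)"]) simp
qed

lemma cofinal_disjoint_family:
  "\<exists>(I::'c set) (C::'c \<Rightarrow> 'a set) (D::'c \<Rightarrow> 'b set).
     |I| =o |K| \<and>
     (\<forall>i\<in>I. aleph0_subgraph A B E (C i) (D i)) \<and>
     (\<forall>i\<in>I. \<forall>j\<in>I. i \<noteq> j \<longrightarrow> C i \<inter> C j = {} \<and> D i \<inter> D j = {}) \<and>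
     (\<forall>X\<subseteq>B. |X| <o |B| \<longrightarrow> (\<exists>i\<in>I. |X| <o |D i| ))"
proof -
  obtain S where S: "cofinal_in |B| S" "|K| =o |S|" using cf unfolding is_cf_def by blast
  then obtain g where g: "bij_betw g K S" using card_of_ordIso by blast
  have gB: "g j \<in> B" if "j \<in> K" for j
    using S(1) bij_betwE[OF g] that unfolding cofinal_in_def Field_card_of by blast
  have "\<forall>j\<in>K. |underS |B| (g j)| <o |B|"
    using card_of_underS[OF card_of_Card_order] gB by (metis Field_card_of)
  from disjoint_pieces[OF this] obtain C D
    where CD: "\<forall>j\<in>K. aleph0_subgraph A B E (C j) (D j) \<and> |underS |B| (g j)| <o |D j|"
      and disj: "\<forall>i\<in>K. \<forall>j\<in>K. i \<noteq> j \<longrightarrow> C i \<inter> C j = {} \<and> D i \<inter> D j = {}"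
    by blast
  have "\<exists>j\<in>K. |X| <o |D j|" if X: "|X| <o |B|" for X :: "'b set"
  proof -
    obtain a where "a \<in> B" and a: "|X| \<le>o |underS |B| a|" using card_of_ordLess_underS[OF X] by blast
    then obtain s where "s \<in> S" "(a, s) \<in> |B|" using S(1) unfolding cofinal_in_def Field_card_of by blast
    then obtain j where j: "j \<in> K" "(a, g j) \<in> |B|" using g unfolding bij_betw_def by blast
    have "|X| \<le>o |underS |B| (g j)|"
      using ordLeq_transitive[OF a card_of_mono1[OF underS_card_of_mono[OF j(2)]]] .
    moreover have "|underS |B| (g j)| <o |D j|" using CD j(1) by blast
    ultimately show ?thesis using j(1) ordLeq_ordLess_trans by blast
  qed
  then show ?thesis
    using CD disj card_of_refl[of K] by (intro exI[of _ K] exI[of _ C] exI[of _ D]) blast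
qed

end

(* GCH is only needed for subsets of A. *)
theorem lemma4p6:
  fixes A :: "'a set" and B :: "'b set" and E :: "('a \<times> 'b) set"
    and cfI :: "'b set"
  assumes gch_a: "GCH_on TYPE('a)"
    and gch_b: "GCH_on TYPE('b)"
    and graph: "lk_graph A B E"
    and cf: "is_cf B cfI"
    and cf_cond: "\<not> (\<exists>M::'b set. cardSuc (card_of (M)) =o (card_of (cfI)) \<and> is_cf M (UNIV :: nat set))"
  shows "(\<exists>C D. aleph0_subgraph A B E C D \<and> (card_of (D)) =o (card_of (B))) \<or>
         (\<exists>(I::'b set) (C::'b \<Rightarrow> 'a set) (D::'b \<Rightarrow> 'b set).
            (card_of (I)) =o (card_of (cfI)) \<and>
            (\<forall>i\<in>I. aleph0_subgraph A B E (C i) (D i)) \<and>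
            (\<forall>i\<in>I. \<forall>j\<in>I. i \<noteq> j \<longrightarrow> C i \<inter> C j = {} \<and> D i \<inter> D j = {}) \<and>
            (\<forall>X\<subseteq>B. (card_of (X)) <o (card_of (B)) \<longrightarrow> (\<exists>i\<in>I. (card_of (X)) <o (card_of (D i)))))"
proof (cases "\<exists>C D. aleph0_subgraph A B E C D \<and> |D| =o |B|")
  case False
  then interpret no_full_aleph0_subgraph A B E cfI
    using gch_a graph cf cf_cond by unfold_locales
  show ?thesis using cofinal_disjoint_family by (rule disjI2)
qed blast

end
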